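(* Let $u$ be the solution of the Cauchy problem in the context. Then for every $t>0$, $u(\cdot,t)$ is convex on $[0,1]$. Moreover there exist constants $c>0$ and $\mu\in\mathbb{R}$ such that $0\le\partial^2_{xx}u(x,t)\le c\,e^{\mu t}$ for all $x\in[0,1]$ and $t>0$.
   Context: Constants: $f_0>0$, $f_1\ge0$ with $\sigma=f_0-f_1>0$; $\lambda_0,\lambda_1\ge0$; $\gamma_0,\gamma_1\in(0,1]$. With $\mathcal{J}_0u(x,t)=u(x+\gamma_0(1-x),t)-u(x,t)$ and $\mathcal{J}_1u(x,t)=u(x-\gamma_1x,t)-u(x,t)$, $u$ is the unique (mild) solution, which is $C^\infty$ on $[0,1]\times[0,\infty)$, of \[ \partial_tu+\sigma(1-x)x\,\partial_xu=\lambda_0f_0\mathcal{J}_0u+\lambda_1f_1\mathcal{J}_1u\ (0\le x\le1,\ t>0),\quad u(x,0)=x. \] *)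

theory Defs
  imports "HOL-Analysis.Analysis"
begin

text \<open>The domain Q = [0,1] x [0,oo).  A family D i j of functions is a complete
  system of continuous partial derivatives of D 0 0 on Q: D i j is the partial
  derivative of order i in x and order j in t (one-sided at the boundary of Q).
  Having such a family is exactly C-infinity smoothness on the closed set Q.\<close>

definition smooth_partials :: "(nat \<Rightarrow> nat \<Rightarrow> real \<Rightarrow> real \<Rightarrow> real) \<Rightarrow> bool" where
  "smooth_partials D \<longleftrightarrow>
     (\<forall>i j. continuous_on ({0..1} \<times> {0..}) (\<lambda>(x,t). D i j x t)) \<and>
     (\<forall>i j t. t \<ge> 0 \<longrightarrow> (\<forall>x\<in>{0..1}.
        ((\<lambda>y. D i j y t) has_real_derivative D (Suc i) j x t) (at x within {0..1}))) \<and>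
     (\<forall>i j x. x \<in> {0..1} \<longrightarrow> (\<forall>t\<ge>0.
        ((\<lambda>s. D i j x s) has_real_derivative D i (Suc j) x t) (at t within {0..})))"

definition is_solution ::
  "real \<Rightarrow> real \<Rightarrow> real \<Rightarrow> real \<Rightarrow> real \<Rightarrow> real \<Rightarrow>
   (nat \<Rightarrow> nat \<Rightarrow> real \<Rightarrow> real \<Rightarrow> real) \<Rightarrow> bool" where
  "is_solution f0 f1 l0 l1 g0 g1 D \<longleftrightarrow>
     smooth_partials D \<and>
     (\<forall>x\<in>{0..1}. \<forall>t>0.
        D 0 1 x t + (f0 - f1) * (1 - x) * x * D 1 0 x t
        = l0 * f0 * (D 0 0 (x + g0 * (1 - x)) t - D 0 0 x t)
          + l1 * f1 * (D 0 0 (x - g1 * x) t - D 0 0 x t)) \<and>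
     (\<forall>x\<in>{0..1}. D 0 0 x 0 = x)"

end

theory Submission
  imports Defs
begin

text \<open>Differentiating the equation in \<open>x\<close> shows that \<open>v = \<partial>\<^sub>x u\<close> and \<open>w = \<partial>\<^sub>x\<^sub>x u\<close> satisfy
  transport equations of the same kind, with bounded zeroth-order terms and jump terms
  \<open>(1 - \<gamma>)\<^sup>k v(x + \<dots>) - v(x)\<close> whose coefficients lie in \<open>[0,1]\<close>. Since the transport
  coefficient \<open>\<sigma>(1 - x)x\<close> vanishes at both ends of \<open>[0,1]\<close>, a minimum principle holds without
  boundary conditions. It gives \<open>v \<ge> 0\<close> and \<open>w \<ge> 0\<close> from \<open>v(\<cdot>,0) = 1\<close>, \<open>w(\<cdot>,0) = 0\<close>, hence
  convexity, and applied to \<open>e\<^sup>\<sigma>\<^sup>t - v\<close> and then to \<open>e\<^sup>4\<^sup>\<sigma>\<^sup>t - w\<close> it gives the exponential bound.\<close>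

lemma has_real_derivative_eq_on_Icc:
  fixes f g :: "real \<Rightarrow> real"
  assumes "a < b" "x \<in> {a..b}" "\<And>y. y \<in> {a..b} \<Longrightarrow> f y = g y"
    and f': "(f has_real_derivative f') (at x within {a..b})"
    and g': "(g has_real_derivative g') (at x within {a..b})"
  shows "f' = g'"
proof -
  have "(g has_real_derivative f') (at x within {a..b})"
    using has_field_derivative_transform_within[OF f', of 1 g] assms(2,3) by auto
  then show ?thesis
    using vector_derivative_unique_within_closed_interval[of a b x g f' g'] assms(1,2) g'
    by (simp add: has_real_derivative_iff_has_vector_derivative)
qed

lemma deriv_eq_0_at_interior_min:
  fixes f :: "real \<Rightarrow> real"
  assumes x: "x \<in> {a<..<b}" and f': "(f has_real_derivative f') (at x within {a..b})"
    and min: "\<And>y. y \<in> {a..b} \<Longrightarrow> f x \<le> f y"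
  shows "f' = 0"
proof (rule DERIV_local_min)
  have "x \<in> interior {a..b}" using x by simp
  then show "(f has_real_derivative f') (at x)" using f' at_within_interior by metis
  show "0 < min (x - a) (b - x)" using x by simp
  show "\<forall>y. \<bar>x - y\<bar> < min (x - a) (b - x) \<longrightarrow> f x \<le> f y"
    using min by (auto simp: abs_if)
qed

lemma mvt_within_Icc:
  fixes g g' :: "real \<Rightarrow> real"
  assumes "x \<le> y" "{x..y} \<subseteq> S"
    and "\<And>z. z \<in> S \<Longrightarrow> (g has_real_derivative g' z) (at z within S)"
  shows "\<exists>\<xi>\<in>{x..y}. g y - g x = g' \<xi> * (y - x)"
proof -
  have "(g has_derivative (\<lambda>h. g' z * h)) (at z within {x..y})" if "x \<le> z" "z \<le> y" for z
    using assms(2,3) that has_field_derivative_subset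
    by (fastforce simp: has_field_derivative_def)
  then show ?thesis using mvt_very_simple[OF assms(1), of g "\<lambda>z h. g' z * h"] by simp
qed

lemma f''_ge0_imp_convex_Icc:
  fixes f f' f'' :: "real \<Rightarrow> real"
  assumes f': "\<And>x. x \<in> {a..b} \<Longrightarrow> (f has_real_derivative f' x) (at x within {a..b})"
    and f'': "\<And>x. x \<in> {a..b} \<Longrightarrow> (f' has_real_derivative f'' x) (at x within {a..b})"
    and nonneg: "\<And>x. x \<in> {a..b} \<Longrightarrow> f'' x \<ge> 0"
  shows "convex_on {a..b} f"
proof (rule pos_convex_function)
  have mono: "f' x \<le> f' y" if xy: "x \<le> y" "x \<in> {a..b}" "y \<in> {a..b}" for x y
  proof -
    have "{x..y} \<subseteq> {a..b}" using xy by auto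
    then obtain \<xi> where "\<xi> \<in> {x..y}" "f' y - f' x = f'' \<xi> * (y - x)"
      using mvt_within_Icc[OF \<open>x \<le> y\<close> _ f''] by blast
    moreover have "f'' \<xi> \<ge> 0" using nonneg \<open>\<xi> \<in> {x..y}\<close> xy by auto
    ultimately show ?thesis using \<open>x \<le> y\<close> by (metis diff_ge_0_iff_ge mult_nonneg_nonneg)
  qed
  fix x y assume xy: "x \<in> {a..b}" "y \<in> {a..b}"
  show "f' x * (y - x) \<le> f y - f x"
  proof (cases "x \<le> y")
    case True
    then obtain \<xi> where "\<xi> \<in> {x..y}" "f y - f x = f' \<xi> * (y - x)"
      using mvt_within_Icc[OF True _ f'] xy by auto
    moreover have "f' x \<le> f' \<xi>" using mono \<open>\<xi> \<in> {x..y}\<close> xy by auto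
    ultimately show ?thesis using True by (simp add: mult_right_mono)
  next
    case False
    then obtain \<xi> where "\<xi> \<in> {y..x}" "f x - f y = f' \<xi> * (x - y)"
      using mvt_within_Icc[of y x "{a..b}" f f'] f' xy by auto
    moreover have "f' \<xi> \<le> f' x" using mono \<open>\<xi> \<in> {y..x}\<close> xy by auto
    ultimately have "f' x * (x - y) \<ge> f x - f y"
      using False by (metis mult_right_mono diff_ge_0_iff_ge nle_le)
    then show ?thesis by (simp add: algebra_simps)
  qed
qed (rule convex_real_interval)

lemma parabolic_min_principle:
  fixes W Wx Wt :: "real \<Rightarrow> real \<Rightarrow> real" and s C :: real
  assumes cont: "continuous_on ({0..1} \<times> {0..}) (\<lambda>(x, t). W x t)"
    and dx: "\<And>x t. x \<in> {0..1} \<Longrightarrow> t > 0 \<Longrightarrow>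
      ((\<lambda>y. W y t) has_real_derivative Wx x t) (at x within {0..1})"
    and dt: "\<And>x t. x \<in> {0..1} \<Longrightarrow> t > 0 \<Longrightarrow>
      ((\<lambda>r. W x r) has_real_derivative Wt x t) (at t within {0..})"
    and init: "\<And>x. x \<in> {0..1} \<Longrightarrow> W x 0 \<ge> 0"
    and at_neg_min: "\<And>x t. x \<in> {0..1} \<Longrightarrow> t > 0 \<Longrightarrow> (\<forall>y\<in>{0..1}. W x t \<le> W y t) \<Longrightarrow>
      W x t < 0 \<Longrightarrow> Wt x t + s * (1 - x) * x * Wx x t \<ge> C * W x t"
    and x: "x \<in> {0..1}" and t: "t \<ge> 0"
  shows "W x t \<ge> 0"
proof (rule ccontr)
  assume neg: "\<not> W x t \<ge> 0"
  \<comment> \<open>Minimise \<open>e\<^sup>-\<^sup>M\<^sup>t W\<close> with \<open>M > \<bar>C\<bar>\<close> over \<open>[0,1] \<times> [0,t]\<close>: at the minimum the transport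
    term vanishes, so the hypothesis makes the time derivative of \<open>e\<^sup>-\<^sup>M\<^sup>t W\<close> positive there,
    contradicting minimality from the left in time.\<close>
  define M where "M = \<bar>C\<bar> + 1"
  define K where "K = {0..1::real} \<times> {0..t}"
  define F where "F = (\<lambda>p. exp (- M * snd p) * (\<lambda>(x, t). W x t) p)"
  have "continuous_on K F"
    unfolding F_def K_def
    by (intro continuous_intros continuous_on_subset[OF cont]) auto
  moreover have "compact K" "K \<noteq> {}" using t unfolding K_def by (auto intro: compact_Times)
  ultimately obtain xs ts where p: "(xs, ts) \<in> K" "\<And>q. q \<in> K \<Longrightarrow> F (xs, ts) \<le> F q"
    using continuous_attains_inf[of K F] by auto
  have xs: "xs \<in> {0..1}" and ts: "0 \<le> ts" "ts \<le> t" using p(1) unfolding K_def by auto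
  have "F (xs, ts) \<le> F (x, t)" using p(2) x t unfolding K_def by auto
  also have "F (x, t) < 0" using neg unfolding F_def by (simp add: mult_pos_neg)
  finally have "F (xs, ts) < 0" .
  then have Wneg: "W xs ts < 0" unfolding F_def by (simp add: mult_less_0_iff)
  have ts0: "ts > 0" using ts init[OF xs] Wneg by (cases "ts = 0") auto
  have xmin: "\<forall>y\<in>{0..1}. W xs ts \<le> W y ts"
  proof
    fix y :: real assume "y \<in> {0..1}"
    then have "F (xs, ts) \<le> F (y, ts)" using p(2) ts unfolding K_def by auto
    then show "W xs ts \<le> W y ts" unfolding F_def by simp
  qed
  have "(1 - xs) * xs * Wx xs ts = 0"
  proof (cases "xs \<in> {0<..<1}")
    case True
    then show ?thesis using deriv_eq_0_at_interior_min[OF True dx[OF xs ts0]] xmin by simp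
  qed (use xs in auto)
  then have Wt: "Wt xs ts \<ge> C * W xs ts" using at_neg_min[OF xs ts0 xmin Wneg] by auto
  have "(C - M) * W xs ts > 0" using Wneg M_def by (intro mult_neg_neg) auto
  then have "exp (- M * ts) * (Wt xs ts - M * W xs ts) > 0"
    using Wt by (simp add: algebra_simps)
  moreover have "((\<lambda>r. exp (- M * r) * W xs r) has_real_derivative
      exp (- M * ts) * (Wt xs ts - M * W xs ts)) (at ts within {0..})"
    using dt[OF xs ts0] by (auto intro!: derivative_eq_intros simp: algebra_simps)
  ultimately obtain d where d: "d > 0"
    "\<And>h. h > 0 \<Longrightarrow> ts - h \<in> {0..} \<Longrightarrow> h < d \<Longrightarrow> F (xs, ts - h) < F (xs, ts)"
    using has_real_derivative_pos_inc_left unfolding F_def by fastforce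
  define h where "h = min (d / 2) ts"
  have "(xs, ts - h) \<in> K" using xs ts d unfolding h_def K_def by auto
  moreover have "F (xs, ts - h) < F (xs, ts)" using d ts0 unfolding h_def by (intro d(2)) auto
  ultimately show False using p(2) by fastforce
qed

lemma parabolic_exp_upper_bound:
  fixes V Vx Vt :: "real \<Rightarrow> real \<Rightarrow> real" and s \<mu> C :: real
  assumes cont: "continuous_on ({0..1} \<times> {0..}) (\<lambda>(x, t). V x t)"
    and dx: "\<And>x t. x \<in> {0..1} \<Longrightarrow> t > 0 \<Longrightarrow>
      ((\<lambda>y. V y t) has_real_derivative Vx x t) (at x within {0..1})"
    and dt: "\<And>x t. x \<in> {0..1} \<Longrightarrow> t > 0 \<Longrightarrow>
      ((\<lambda>r. V x r) has_real_derivative Vt x t) (at t within {0..})"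
    and init: "\<And>x. x \<in> {0..1} \<Longrightarrow> V x 0 \<le> 1"
    and at_max: "\<And>x t. x \<in> {0..1} \<Longrightarrow> t > 0 \<Longrightarrow> (\<forall>y\<in>{0..1}. V y t \<le> V x t) \<Longrightarrow>
      V x t > exp (\<mu> * t) \<Longrightarrow>
      Vt x t + s * (1 - x) * x * Vx x t \<le> \<mu> * exp (\<mu> * t) + C * (V x t - exp (\<mu> * t))"
    and x: "x \<in> {0..1}" and t: "t \<ge> 0"
  shows "V x t \<le> exp (\<mu> * t)"
proof -
  have "exp (\<mu> * t) - V x t \<ge> 0"
  proof (rule parabolic_min_principle[where W = "\<lambda>x t. exp (\<mu> * t) - V x t"
      and Wx = "\<lambda>x t. - Vx x t" and Wt = "\<lambda>x t. \<mu> * exp (\<mu> * t) - Vt x t" and s = s and C = C,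
      OF _ _ _ _ _ x t])
    have "(\<lambda>(x, t). exp (\<mu> * t) - V x t) = (\<lambda>p. exp (\<mu> * snd p) - (\<lambda>(x, t). V x t) p)"
      by (auto simp: fun_eq_iff)
    then show "continuous_on ({0..1} \<times> {0..}) (\<lambda>(x, t). exp (\<mu> * t) - V x t)"
      using cont by (auto intro!: continuous_intros)
  next
    fix x t :: real assume "x \<in> {0..1}" "t > 0"
    then show "((\<lambda>y. exp (\<mu> * t) - V y t) has_real_derivative - Vx x t) (at x within {0..1})"
      and "((\<lambda>r. exp (\<mu> * r) - V x r) has_real_derivative \<mu> * exp (\<mu> * t) - Vt x t)
        (at t within {0..})"
      using dx dt by (auto intro!: derivative_eq_intros)
  next
    fix x t :: real
    assume "x \<in> {0..1}" "t > 0" "\<forall>y\<in>{0..1}. exp (\<mu> * t) - V x t \<le> exp (\<mu> * t) - V y t"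
      "exp (\<mu> * t) - V x t < 0"
    then have "Vt x t + s * (1 - x) * x * Vx x t \<le> \<mu> * exp (\<mu> * t) + C * (V x t - exp (\<mu> * t))"
      by (intro at_max) auto
    then show "\<mu> * exp (\<mu> * t) - Vt x t + s * (1 - x) * x * - Vx x t \<ge> C * (exp (\<mu> * t) - V x t)"
      by (simp add: algebra_simps)
  qed (use init in simp)
  then show ?thesis by simp
qed

lemma scaled_jump_nonneg:
  fixes c w w' :: real
  assumes "0 \<le> c" "c \<le> 1" "w \<le> 0" "w \<le> w'"
  shows "0 \<le> c * w' - w"
  using mult_left_mono[OF assms(4,1)] mult_right_mono_neg[OF assms(2,3)] by simp

lemma scaled_jump_nonpos:
  fixes c w w' :: real
  assumes "0 \<le> c" "c \<le> 1" "0 \<le> w'" "w' \<le> w"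
  shows "c * w' - w \<le> 0"
  using mult_right_mono[OF assms(2,3)] assms(4) by simp

lemma drift_factor_bounds:
  fixes x v :: real
  assumes "x \<in> {0..1}"
  shows drift_factor_nonpos: "v \<le> 0 \<Longrightarrow> v \<le> (2 * x - 1) * v"
    and drift_factor_nonneg: "0 \<le> v \<Longrightarrow> (2 * x - 1) * v \<le> v"
proof -
  have eq: "(2 * x - 1) * v - v = - 2 * ((1 - x) * v)" by (simp add: algebra_simps)
  have "1 - x \<ge> 0" using assms by simp
  then show "v \<le> 0 \<Longrightarrow> v \<le> (2 * x - 1) * v" "0 \<le> v \<Longrightarrow> (2 * x - 1) * v \<le> v"
    using eq mult_nonneg_nonpos[of "1 - x" v] mult_nonneg_nonneg[of "1 - x" v] by linarith+
qed

locale cauchy_solution =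
  fixes f0 f1 l0 l1 g0 g1 :: real and D :: "nat \<Rightarrow> nat \<Rightarrow> real \<Rightarrow> real \<Rightarrow> real"
  assumes f1_nonneg: "f1 \<ge> 0" and drift_pos: "f0 - f1 > 0"
    and l0_nonneg: "l0 \<ge> 0" and l1_nonneg: "l1 \<ge> 0"
    and g0: "0 < g0" "g0 \<le> 1" and g1: "0 < g1" "g1 \<le> 1"
    and solution: "is_solution f0 f1 l0 l1 g0 g1 D"
begin

abbreviation \<sigma> :: real where "\<sigma> \<equiv> f0 - f1"
abbreviation rate0 :: real where "rate0 \<equiv> l0 * f0"
abbreviation rate1 :: real where "rate1 \<equiv> l1 * f1"
abbreviation shift0 :: "real \<Rightarrow> real" where "shift0 x \<equiv> x + g0 * (1 - x)"
abbreviation shift1 :: "real \<Rightarrow> real" where "shift1 x \<equiv> x - g1 * x"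

lemma rates_nonneg: "rate0 \<ge> 0" "rate1 \<ge> 0"
  using f1_nonneg drift_pos l0_nonneg l1_nonneg by simp_all

lemma D_continuous: "continuous_on ({0..1} \<times> {0..}) (\<lambda>(x, t). D i j x t)"
  using solution unfolding is_solution_def smooth_partials_def by blast

lemma D_deriv_x:
  "t \<ge> 0 \<Longrightarrow> x \<in> {0..1} \<Longrightarrow>
    ((\<lambda>y. D i j y t) has_real_derivative D (Suc i) j x t) (at x within {0..1})"
  using solution unfolding is_solution_def smooth_partials_def by blast

lemma D_deriv_t:
  "x \<in> {0..1} \<Longrightarrow> t \<ge> 0 \<Longrightarrow>
    ((\<lambda>s. D i j x s) has_real_derivative D i (Suc j) x t) (at t within {0..})"
  using solution unfolding is_solution_def smooth_partials_def by blast

lemma pde: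
  "x \<in> {0..1} \<Longrightarrow> t > 0 \<Longrightarrow> D 0 1 x t + \<sigma> * (1 - x) * x * D 1 0 x t
    = rate0 * (D 0 0 (shift0 x) t - D 0 0 x t) + rate1 * (D 0 0 (shift1 x) t - D 0 0 x t)"
  using solution unfolding is_solution_def by blast

lemma initial: "x \<in> {0..1} \<Longrightarrow> D 0 0 x 0 = x"
  using solution unfolding is_solution_def by blast

lemma shifts_in_unit_interval:
  assumes "x \<in> {0..1}"
  shows shift0_in: "shift0 x \<in> {0..1}" and shift1_in: "shift1 x \<in> {0..1}"
proof -
  have "0 \<le> g0 * (1 - x)" "g0 * (1 - x) \<le> 1 - x" "0 \<le> g1 * x" "g1 * x \<le> x"
    using assms g0 g1 by (auto intro: mult_left_le_one_le)
  then show "shift0 x \<in> {0..1}" "shift1 x \<in> {0..1}" using assms g0 g1 by auto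
qed

lemma D_comp_deriv_x:
  assumes "t \<ge> 0" "x \<in> {0..1}" "(h has_real_derivative q) (at x within {0..1})"
    "h ` {0..1} \<subseteq> {0..1}"
  shows "((\<lambda>y. D i j (h y) t) has_real_derivative D (Suc i) j (h x) t * q) (at x within {0..1})"
proof -
  have "((\<lambda>y. D i j y t) has_real_derivative D (Suc i) j (h x) t) (at (h x) within h ` {0..1})"
    using D_deriv_x[OF assms(1)] assms(2,4) has_field_derivative_subset by blast
  then show ?thesis using DERIV_image_chain[OF _ assms(3)] by (simp add: o_def)
qed

lemma D_shift_deriv_x:
  assumes "t \<ge> 0" "x \<in> {0..1}"
  shows "((\<lambda>y. D i j (shift0 y) t) has_real_derivative D (Suc i) j (shift0 x) t * (1 - g0))
      (at x within {0..1})"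
    and "((\<lambda>y. D i j (shift1 y) t) has_real_derivative D (Suc i) j (shift1 x) t * (1 - g1))
      (at x within {0..1})"
  using shift0_in shift1_in
  by (auto intro!: D_comp_deriv_x assms derivative_eq_intros)

lemma pde_x:
  assumes x: "x \<in> {0..1}" and t: "t > 0"
  shows "D 1 1 x t + \<sigma> * (1 - x) * x * D 2 0 x t
    = \<sigma> * (2 * x - 1) * D 1 0 x t + rate0 * ((1 - g0) * D 1 0 (shift0 x) t - D 1 0 x t)
      + rate1 * ((1 - g1) * D 1 0 (shift1 x) t - D 1 0 x t)"
proof -
  have t0: "t \<ge> 0" using t by simp
  have dL: "((\<lambda>y. D 0 1 y t + \<sigma> * (1 - y) * y * D 1 0 y t) has_real_derivative
      D 1 1 x t + (\<sigma> * (1 - 2 * x) * D 1 0 x t + \<sigma> * (1 - x) * x * D 2 0 x t)) (at x within {0..1})"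
    using D_deriv_x[OF t0 x, of 0 1] D_deriv_x[OF t0 x, of 1 0]
    by (auto intro!: derivative_eq_intros simp: algebra_simps numeral_2_eq_2)
  have dR: "((\<lambda>y. rate0 * (D 0 0 (shift0 y) t - D 0 0 y t) + rate1 * (D 0 0 (shift1 y) t - D 0 0 y t))
      has_real_derivative rate0 * (D 1 0 (shift0 x) t * (1 - g0) - D 1 0 x t)
        + rate1 * (D 1 0 (shift1 x) t * (1 - g1) - D 1 0 x t)) (at x within {0..1})"
    using D_deriv_x[OF t0 x, of 0 0] D_shift_deriv_x[OF t0 x, of 0 0]
    by (auto intro!: derivative_eq_intros)
  have "D 1 1 x t + (\<sigma> * (1 - 2 * x) * D 1 0 x t + \<sigma> * (1 - x) * x * D 2 0 x t)
      = rate0 * (D 1 0 (shift0 x) t * (1 - g0) - D 1 0 x t)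
        + rate1 * (D 1 0 (shift1 x) t * (1 - g1) - D 1 0 x t)"
    by (rule has_real_derivative_eq_on_Icc[OF zero_less_one x _ dL dR]) (use pde t in auto)
  then show ?thesis by (simp add: algebra_simps)
qed

lemma pde_xx:
  assumes x: "x \<in> {0..1}" and t: "t > 0"
  shows "D 2 1 x t + \<sigma> * (1 - x) * x * D 3 0 x t
    = 2 * \<sigma> * D 1 0 x t + 2 * \<sigma> * (2 * x - 1) * D 2 0 x t
      + rate0 * ((1 - g0)\<^sup>2 * D 2 0 (shift0 x) t - D 2 0 x t)
      + rate1 * ((1 - g1)\<^sup>2 * D 2 0 (shift1 x) t - D 2 0 x t)"
proof -
  have t0: "t \<ge> 0" using t by simp
  have dL: "((\<lambda>y. D 1 1 y t + \<sigma> * (1 - y) * y * D 2 0 y t) has_real_derivative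
      D 2 1 x t + (\<sigma> * (1 - 2 * x) * D 2 0 x t + \<sigma> * (1 - x) * x * D 3 0 x t)) (at x within {0..1})"
    using D_deriv_x[OF t0 x, of 1 1] D_deriv_x[OF t0 x, of 2 0]
    by (auto intro!: derivative_eq_intros simp: algebra_simps numeral_2_eq_2 numeral_3_eq_3)
  have dR: "((\<lambda>y. \<sigma> * (2 * y - 1) * D 1 0 y t
        + rate0 * ((1 - g0) * D 1 0 (shift0 y) t - D 1 0 y t)
        + rate1 * ((1 - g1) * D 1 0 (shift1 y) t - D 1 0 y t))
      has_real_derivative (2 * \<sigma> * D 1 0 x t + \<sigma> * (2 * x - 1) * D 2 0 x t)
        + rate0 * ((1 - g0) * (D 2 0 (shift0 x) t * (1 - g0)) - D 2 0 x t)
        + rate1 * ((1 - g1) * (D 2 0 (shift1 x) t * (1 - g1)) - D 2 0 x t)) (at x within {0..1})"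
    using D_deriv_x[OF t0 x, of 1 0] D_shift_deriv_x[OF t0 x, of 1 0]
    by (auto intro!: derivative_eq_intros simp: algebra_simps numeral_2_eq_2)
  have "D 2 1 x t + (\<sigma> * (1 - 2 * x) * D 2 0 x t + \<sigma> * (1 - x) * x * D 3 0 x t)
      = (2 * \<sigma> * D 1 0 x t + \<sigma> * (2 * x - 1) * D 2 0 x t)
        + rate0 * ((1 - g0) * (D 2 0 (shift0 x) t * (1 - g0)) - D 2 0 x t)
        + rate1 * ((1 - g1) * (D 2 0 (shift1 x) t * (1 - g1)) - D 2 0 x t)"
    by (rule has_real_derivative_eq_on_Icc[OF zero_less_one x _ dL dR]) (use pde_x t in auto)
  then show ?thesis by (simp add: algebra_simps power2_eq_square)
qed

lemma D10_initial:
  assumes "x \<in> {0..1}" shows "D 1 0 x 0 = 1"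
  using has_real_derivative_eq_on_Icc[OF zero_less_one assms _ D_deriv_x[of 0 x 0 0] DERIV_ident]
    initial assms by simp

lemma D20_initial:
  assumes "x \<in> {0..1}" shows "D 2 0 x 0 = 0"
  using has_real_derivative_eq_on_Icc[OF zero_less_one assms _ D_deriv_x[of 0 x 1 0] DERIV_const]
    D10_initial assms by (simp add: numeral_2_eq_2)

lemma D10_deriv_x:
  "x \<in> {0..1} \<Longrightarrow> t > 0 \<Longrightarrow>
    ((\<lambda>y. D 1 0 y t) has_real_derivative D 2 0 x t) (at x within {0..1})"
  using D_deriv_x[of t x 1 0] by (simp add: numeral_2_eq_2)

lemma D20_deriv_x:
  "x \<in> {0..1} \<Longrightarrow> t > 0 \<Longrightarrow>
    ((\<lambda>y. D 2 0 y t) has_real_derivative D 3 0 x t) (at x within {0..1})"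
  using D_deriv_x[of t x 2 0] by (simp add: numeral_2_eq_2 numeral_3_eq_3)

lemma D10_deriv_t:
  "x \<in> {0..1} \<Longrightarrow> t > 0 \<Longrightarrow>
    ((\<lambda>r. D 1 0 x r) has_real_derivative D 1 1 x t) (at t within {0..})"
  using D_deriv_t[of x t 1 0] by simp

lemma D20_deriv_t:
  "x \<in> {0..1} \<Longrightarrow> t > 0 \<Longrightarrow>
    ((\<lambda>r. D 2 0 x r) has_real_derivative D 2 1 x t) (at t within {0..})"
  using D_deriv_t[of x t 2 0] by simp

lemma D10_nonneg:
  assumes "x \<in> {0..1}" "t \<ge> 0"
  shows "0 \<le> D 1 0 x t"
proof (rule parabolic_min_principle[where W = "D 1 0" and Wx = "D 2 0" and Wt = "D 1 1"
    and s = \<sigma> and C = \<sigma>, OF D_continuous D10_deriv_x D10_deriv_t _ _ assms])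
  show "\<And>x. x \<in> {0..1} \<Longrightarrow> 0 \<le> D 1 0 x 0" using D10_initial by (simp add: One_nat_def)
next
  fix x t :: real
  assume x: "x \<in> {0..1}" and t: "t > 0"
    and min: "\<forall>y\<in>{0..1}. D 1 0 x t \<le> D 1 0 y t" and neg: "D 1 0 x t < 0"
  have "\<sigma> * D 1 0 x t \<le> \<sigma> * (2 * x - 1) * D 1 0 x t"
    using mult_left_mono[OF drift_factor_nonpos[OF x]] drift_pos neg by (simp add: mult.assoc)
  moreover have "0 \<le> rate0 * ((1 - g0) * D 1 0 (shift0 x) t - D 1 0 x t)"
    using rates_nonneg g0 neg min shift0_in[OF x] by (auto intro!: mult_nonneg_nonneg scaled_jump_nonneg)
  moreover have "0 \<le> rate1 * ((1 - g1) * D 1 0 (shift1 x) t - D 1 0 x t)"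
    using rates_nonneg g1 neg min shift1_in[OF x] by (auto intro!: mult_nonneg_nonneg scaled_jump_nonneg)
  ultimately show "D 1 1 x t + \<sigma> * (1 - x) * x * D 2 0 x t \<ge> \<sigma> * D 1 0 x t"
    unfolding pde_x[OF x t] by linarith
qed

lemma D20_nonneg:
  assumes "x \<in> {0..1}" "t \<ge> 0"
  shows "0 \<le> D 2 0 x t"
proof (rule parabolic_min_principle[where W = "D 2 0" and Wx = "D 3 0" and Wt = "D 2 1"
    and s = \<sigma> and C = "2 * \<sigma>", OF D_continuous D20_deriv_x D20_deriv_t _ _ assms])
  show "\<And>x. x \<in> {0..1} \<Longrightarrow> 0 \<le> D 2 0 x 0" by (simp add: D20_initial)
next
  fix x t :: real
  assume x: "x \<in> {0..1}" and t: "t > 0"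
    and min: "\<forall>y\<in>{0..1}. D 2 0 x t \<le> D 2 0 y t" and neg: "D 2 0 x t < 0"
  have "0 \<le> 2 * \<sigma> * D 1 0 x t" using D10_nonneg[OF x] t drift_pos by simp
  moreover have "2 * \<sigma> * D 2 0 x t \<le> 2 * \<sigma> * (2 * x - 1) * D 2 0 x t"
    using mult_left_mono[OF drift_factor_nonpos[OF x], of "D 2 0 x t" "2 * \<sigma>"] drift_pos neg
    by (simp add: mult.assoc)
  moreover have "0 \<le> rate0 * ((1 - g0)\<^sup>2 * D 2 0 (shift0 x) t - D 2 0 x t)"
    using rates_nonneg g0 neg min shift0_in[OF x]
    by (auto intro!: mult_nonneg_nonneg scaled_jump_nonneg power_le_one)
  moreover have "0 \<le> rate1 * ((1 - g1)\<^sup>2 * D 2 0 (shift1 x) t - D 2 0 x t)"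
    using rates_nonneg g1 neg min shift1_in[OF x]
    by (auto intro!: mult_nonneg_nonneg scaled_jump_nonneg power_le_one)
  ultimately show "D 2 1 x t + \<sigma> * (1 - x) * x * D 3 0 x t \<ge> 2 * \<sigma> * D 2 0 x t"
    unfolding pde_xx[OF x t] by linarith
qed

lemma D10_le_exp:
  assumes "x \<in> {0..1}" "t \<ge> 0"
  shows "D 1 0 x t \<le> exp (\<sigma> * t)"
proof (rule parabolic_exp_upper_bound[where Vx = "D 2 0" and Vt = "D 1 1"
    and s = \<sigma> and C = \<sigma>, OF D_continuous D10_deriv_x D10_deriv_t _ _ assms])
  show "\<And>x. x \<in> {0..1} \<Longrightarrow> D 1 0 x 0 \<le> 1" using D10_initial by (simp add: One_nat_def)
next
  fix x t :: real
  assume x: "x \<in> {0..1}" and t: "t > 0"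
    and max: "\<forall>y\<in>{0..1}. D 1 0 y t \<le> D 1 0 x t" and big: "D 1 0 x t > exp (\<sigma> * t)"
  have pos: "D 1 0 x t \<ge> 0" using big exp_gt_zero[of "\<sigma> * t"] by linarith
  have "\<sigma> * (2 * x - 1) * D 1 0 x t \<le> \<sigma> * D 1 0 x t"
    using mult_left_mono[OF drift_factor_nonneg[OF x pos]] drift_pos by (simp add: mult.assoc)
  moreover have "rate0 * ((1 - g0) * D 1 0 (shift0 x) t - D 1 0 x t) \<le> 0"
    using rates_nonneg g0 max shift0_in[OF x] D10_nonneg[OF shift0_in[OF x]] t
    by (auto intro!: mult_nonneg_nonpos scaled_jump_nonpos)
  moreover have "rate1 * ((1 - g1) * D 1 0 (shift1 x) t - D 1 0 x t) \<le> 0"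
    using rates_nonneg g1 max shift1_in[OF x] D10_nonneg[OF shift1_in[OF x]] t
    by (auto intro!: mult_nonneg_nonpos scaled_jump_nonpos)
  moreover have "\<sigma> * exp (\<sigma> * t) + \<sigma> * (D 1 0 x t - exp (\<sigma> * t)) = \<sigma> * D 1 0 x t"
    by (simp add: algebra_simps)
  ultimately show "D 1 1 x t + \<sigma> * (1 - x) * x * D 2 0 x t
      \<le> \<sigma> * exp (\<sigma> * t) + \<sigma> * (D 1 0 x t - exp (\<sigma> * t))"
    unfolding pde_x[OF x t] by linarith
qed

lemma D20_le_exp:
  assumes "x \<in> {0..1}" "t \<ge> 0"
  shows "D 2 0 x t \<le> exp (4 * \<sigma> * t)"
proof (rule parabolic_exp_upper_bound[where Vx = "D 3 0" and Vt = "D 2 1"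
    and s = \<sigma> and C = "2 * \<sigma>", OF D_continuous D20_deriv_x D20_deriv_t _ _ assms])
  show "\<And>x. x \<in> {0..1} \<Longrightarrow> D 2 0 x 0 \<le> 1" by (simp add: D20_initial)
next
  fix x t :: real
  assume x: "x \<in> {0..1}" and t: "t > 0"
    and max: "\<forall>y\<in>{0..1}. D 2 0 y t \<le> D 2 0 x t" and big: "D 2 0 x t > exp (4 * \<sigma> * t)"
  have pos: "D 2 0 x t \<ge> 0" using big exp_gt_zero[of "4 * \<sigma> * t"] by linarith
  have "\<sigma> * t \<le> 4 * \<sigma> * t" using drift_pos t by simp
  then have "D 1 0 x t \<le> exp (4 * \<sigma> * t)"
    using D10_le_exp[OF x] t by (meson exp_le_cancel_iff less_imp_le order.trans)
  then have "2 * \<sigma> * D 1 0 x t \<le> 2 * \<sigma> * exp (4 * \<sigma> * t)" using drift_pos by simp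
  moreover have "2 * \<sigma> * (2 * x - 1) * D 2 0 x t \<le> 2 * \<sigma> * D 2 0 x t"
    using mult_left_mono[OF drift_factor_nonneg[OF x pos], of "2 * \<sigma>"] drift_pos
    by (simp add: mult.assoc)
  moreover have "rate0 * ((1 - g0)\<^sup>2 * D 2 0 (shift0 x) t - D 2 0 x t) \<le> 0"
    using rates_nonneg g0 max shift0_in[OF x] D20_nonneg[OF shift0_in[OF x]] t
    by (auto intro!: mult_nonneg_nonpos scaled_jump_nonpos power_le_one)
  moreover have "rate1 * ((1 - g1)\<^sup>2 * D 2 0 (shift1 x) t - D 2 0 x t) \<le> 0"
    using rates_nonneg g1 max shift1_in[OF x] D20_nonneg[OF shift1_in[OF x]] t
    by (auto intro!: mult_nonneg_nonpos scaled_jump_nonpos power_le_one)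
  moreover have "4 * \<sigma> * exp (4 * \<sigma> * t) + 2 * \<sigma> * (D 2 0 x t - exp (4 * \<sigma> * t))
      = 2 * \<sigma> * exp (4 * \<sigma> * t) + 2 * \<sigma> * D 2 0 x t"
    by (simp add: algebra_simps)
  ultimately show "D 2 1 x t + \<sigma> * (1 - x) * x * D 3 0 x t
      \<le> 4 * \<sigma> * exp (4 * \<sigma> * t) + 2 * \<sigma> * (D 2 0 x t - exp (4 * \<sigma> * t))"
    unfolding pde_xx[OF x t] by linarith
qed

lemma convex_in_x:
  assumes "t \<ge> 0" shows "convex_on {0..1} (\<lambda>x. D 0 0 x t)"
proof (rule f''_ge0_imp_convex_Icc)
  show "((\<lambda>x. D 0 0 x t) has_real_derivative D 1 0 x t) (at x within {0..1})"
    and "((\<lambda>x. D 1 0 x t) has_real_derivative D 2 0 x t) (at x within {0..1})"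
    and "0 \<le> D 2 0 x t" if "x \<in> {0..1}" for x
    using D_deriv_x[OF assms that, of 0 0] D_deriv_x[OF assms that, of 1 0] D20_nonneg[OF that assms]
    by (simp_all add: numeral_2_eq_2)
qed

end

theorem lemma4p3:
  fixes f0 f1 l0 l1 g0 g1 :: real
    and D :: "nat \<Rightarrow> nat \<Rightarrow> real \<Rightarrow> real \<Rightarrow> real"
  assumes "f0 > 0" and "f1 \<ge> 0" and "f0 - f1 > 0"
    and "l0 \<ge> 0" and "l1 \<ge> 0"
    and "0 < g0" and "g0 \<le> 1" and "0 < g1" and "g1 \<le> 1"
    and "is_solution f0 f1 l0 l1 g0 g1 D"
  shows "(\<forall>t>0. convex_on {0..1} (\<lambda>x. D 0 0 x t)) \<and>
         (\<exists>c>0. \<exists>\<mu>::real. \<forall>x\<in>{0..1}. \<forall>t>0.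
             0 \<le> D 2 0 x t \<and> D 2 0 x t \<le> c * exp (\<mu> * t))"
proof -
  interpret cauchy_solution f0 f1 l0 l1 g0 g1 D
    using assms(2-10) by unfold_locales
  have "\<forall>x\<in>{0..1}. \<forall>t>0. 0 \<le> D 2 0 x t \<and> D 2 0 x t \<le> 1 * exp (4 * (f0 - f1) * t)"
    using D20_nonneg D20_le_exp by simp
  moreover have "\<forall>t>0. convex_on {0..1} (\<lambda>x. D 0 0 x t)"
    using convex_in_x by simp
  ultimately show ?thesis by (metis zero_less_one)
qed

end
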